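(* Let $G$ be a finite non-abelian group satisfying condition (Con), and let $L$ be the Laplacian matrix of $\mathcal C_G$. Let $\mathcal F_0,\ldots,\mathcal F_{r-1}$ be the vertex sets of the connected components of the induced subgraph of $\mathcal C_G$ on $G\setminus Z(G)$ (so $r\ge 2$), and for each $i$ let $\lambda_i=|C(u)|$ for any $u\in\mathcal F_i$ (this is independent of the choice of $u$, and $\lambda_i=|\mathcal F_i|+|Z(G)|$). Then the spectrum of $L$, as a multiset, is the union of: $0$ with multiplicity $1$; $|Z(G)|$ with multiplicity $r-1$; for each $i\in\{0,\ldots,r-1\}$, $\lambda_i$ with multiplicity $|\mathcal F_i|-1$ (multiplicities adding when several $\lambda_i$ coincide); and $|G|$ with multiplicity $|Z(G)|$. In particular $L$ has exactly $|G|-1$ nonzero eigenvalues counted with multiplicity, and the largest eigenvalue of $L$ is $|G|$, with multiplicity $|Z(G)|$.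
   Context: For a finite group $G$, the commuting graph $\mathcal C_G$ is the simple undirected graph with vertex set $G$ in which distinct $u,v\in G$ are adjacent iff $uv=vu$. The Laplacian matrix of a simple graph is $L=D-A$ ($A$ adjacency matrix, $D$ diagonal degree matrix). $Z(G)$ is the center of $G$ and $C(v)=\{w\in G: wv=vw\}$ the centralizer of $v$. Condition (Con): for all $u,v\in G\setminus Z(G)$, either $C(u)=C(v)$ or $C(u)\cap C(v)=Z(G)$. *)

theory Defs
  imports "HOL-Algebra.Group" "Jordan_Normal_Form.Char_Poly"
begin

definition grp_center :: "('a, 'b) monoid_scheme \<Rightarrow> 'a set" where
  "grp_center G = {z \<in> carrier G. \<forall>g \<in> carrier G. z \<otimes>\<^bsub>G\<^esub> g = g \<otimes>\<^bsub>G\<^esub> z}"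

definition grp_centralizer :: "('a, 'b) monoid_scheme \<Rightarrow> 'a \<Rightarrow> 'a set" where
  "grp_centralizer G v = {w \<in> carrier G. w \<otimes>\<^bsub>G\<^esub> v = v \<otimes>\<^bsub>G\<^esub> w}"

definition con_condition :: "('a, 'b) monoid_scheme \<Rightarrow> bool" where
  "con_condition G \<longleftrightarrow>
     (\<forall>u \<in> carrier G - grp_center G. \<forall>v \<in> carrier G - grp_center G.
        grp_centralizer G u = grp_centralizer G v \<or>
        grp_centralizer G u \<inter> grp_centralizer G v = grp_center G)"

definition comm_adj :: "('a, 'b) monoid_scheme \<Rightarrow> 'a \<Rightarrow> 'a \<Rightarrow> bool" where
  "comm_adj G u v \<longleftrightarrow> u \<in> carrier G \<and> v \<in> carrier G \<and> u \<noteq> v \<and>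
     u \<otimes>\<^bsub>G\<^esub> v = v \<otimes>\<^bsub>G\<^esub> u"

definition comm_degree :: "('a, 'b) monoid_scheme \<Rightarrow> 'a \<Rightarrow> nat" where
  "comm_degree G v = card {w. comm_adj G v w}"

definition comm_laplacian :: "('a, 'b) monoid_scheme \<Rightarrow> 'a list \<Rightarrow> real mat" where
  "comm_laplacian G vs = mat (length vs) (length vs)
     (\<lambda>(i, j). if i = j then real (comm_degree G (vs ! i))
              else if comm_adj G (vs ! i) (vs ! j) then -1 else 0)"

definition nc_adj :: "('a, 'b) monoid_scheme \<Rightarrow> 'a \<Rightarrow> 'a \<Rightarrow> bool" where
  "nc_adj G u v \<longleftrightarrow> comm_adj G u v \<and> u \<notin> grp_center G \<and> v \<notin> grp_center G"

definition nc_components :: "('a, 'b) monoid_scheme \<Rightarrow> 'a set set" where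
  "nc_components G = (\<lambda>u. {v. (nc_adj G)\<^sup>*\<^sup>* u v}) ` (carrier G - grp_center G)"

definition spectrum_mset :: "real mat \<Rightarrow> real multiset \<Rightarrow> bool" where
  "spectrum_mset A M \<longleftrightarrow> char_poly A = (\<Prod>a\<in>#M. [:- a, 1:])"

end

theory Submission
  imports Defs
begin

text \<open>Under (Con) two non-central elements commute iff they have the same centralizer, so the
  commuting graph is the join of the complete graph on Z(G) with the disjoint union of the
  complete graphs on the components C(u) - Z(G). For such a graph an eigenbasis of the Laplacian
  can be written down: in every block (Z(G) or a component) the differences of indicator vectors
  e_y - e_r against a fixed representative r have eigenvalue |G| on Z(G) and |C(u)| on C(u) - Z(G);
  the constant vector has eigenvalue 0; the vector that is |G| - |Z(G)| on Z(G) and -|Z(G)|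
  elsewhere has eigenvalue |G|; and, for a fixed component F0 and each other component F, the
  vector that is |F| on F0 and -|F0| on F has eigenvalue |Z(G)|. These |G| vectors are linearly
  independent, so the characteristic polynomial is the product of the corresponding factors.\<close>

lemma char_poly_diagonalizable:
  fixes A P :: "real mat"
  assumes A: "A \<in> carrier_mat n n" and P: "P \<in> carrier_mat n n" and "det P \<noteq> 0"
    and AP: "A * P = P * mat n n (\<lambda>(i, j). if i = j then d i else 0)"
  shows "char_poly A = (\<Prod>i\<leftarrow>[0..<n]. [:- d i, 1:])"
proof -
  define D where "D = mat n n (\<lambda>(i, j). if i = j then d i else (0::real))"
  have D: "D \<in> carrier_mat n n" unfolding D_def by auto
  obtain Q where Q: "Q \<in> carrier_mat n n" and QP: "Q * P = 1\<^sub>m n" and PQ: "P * Q = 1\<^sub>m n"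
    using det_non_zero_imp_unit[OF P \<open>det P \<noteq> 0\<close>, of "()"] unfolding Units_def ring_mat_def by auto
  have "A = A * (P * Q)" using A PQ by simp
  also have "\<dots> = A * P * Q" using A P Q by (simp add: assoc_mult_mat)
  also have "\<dots> = P * D * Q" using AP by (simp add: D_def)
  finally have "similar_mat A D" using A P Q D PQ QP by (intro similar_matI[where P = P and Q = Q]) auto
  then have "char_poly A = char_poly D" by (rule char_poly_similar)
  also have "\<dots> = (\<Prod>a\<leftarrow>diag_mat D. [:- a, 1:])"
    by (rule char_poly_upper_triangular[OF D]) (auto simp: upper_triangular_def D_def)
  also have "diag_mat D = map d [0..<n]"
    by (auto simp: diag_mat_def D_def intro!: nth_equalityI)
  finally show ?thesis by (simp add: comp_def)
qed

lemma sum_nth_distinct: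
  "distinct xs \<Longrightarrow> (\<Sum>k<length xs. f (xs ! k)) = sum f (set xs)"
  by (simp add: sum.distinct_set_conv_list sum_list_sum_nth atLeast0LessThan)

lemma det_mat_ne_zero_if_independent:
  fixes e :: "'v \<Rightarrow> 'v \<Rightarrow> real"
  assumes vs: "distinct vs"
    and indep: "\<And>c y. (\<And>w. w \<in> set vs \<Longrightarrow> (\<Sum>y\<in>set vs. c y * e y w) = 0) \<Longrightarrow> y \<in> set vs \<Longrightarrow> c y = 0"
  shows "det (mat (length vs) (length vs) (\<lambda>(i, j). e (vs ! j) (vs ! i))) \<noteq> 0"
proof
  define n where "n = length vs"
  define P where "P = mat n n (\<lambda>(i, j). e (vs ! j) (vs ! i))"
  assume "det (mat (length vs) (length vs) (\<lambda>(i, j). e (vs ! j) (vs ! i))) = 0"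
  then obtain v where v: "v \<in> carrier_vec n" "v \<noteq> 0\<^sub>v n" "P *\<^sub>v v = 0\<^sub>v n"
    using det_0_iff_vec_prod_zero_field[of P n] by (auto simp: P_def n_def)
  define c where "c y = v $ (THE k. k < n \<and> vs ! k = y)" for y
  have c_nth: "c (vs ! k) = v $ k" if "k < n" for k
    using that vs unfolding c_def n_def by (subst the_equality) (auto simp: nth_eq_iff_index_eq)
  have "c y = 0" if "y \<in> set vs" for y
  proof (rule indep[OF _ that])
    fix w assume "w \<in> set vs"
    then obtain i where i: "i < n" and w: "w = vs ! i" by (auto simp: n_def in_set_conv_nth)
    have "(\<Sum>y\<in>set vs. c y * e y w) = (\<Sum>k<n. v $ k * e (vs ! k) w)"
      using sum_nth_distinct[OF vs, of "\<lambda>y. c y * e y w"] c_nth by (simp add: n_def)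
    also have "\<dots> = (P *\<^sub>v v) $ i"
      using i v(1) w by (simp add: P_def scalar_prod_def atLeast0LessThan mult.commute)
    finally show "(\<Sum>y\<in>set vs. c y * e y w) = 0" using v(3) i by simp
  qed
  then have "v = 0\<^sub>v n"
    using v(1) c_nth by (intro eq_vecI) (auto simp: n_def)
  with v(2) show False ..
qed

lemma spectrum_mset_of_eigenbasis:
  fixes a e :: "'v \<Rightarrow> 'v \<Rightarrow> real" and mu :: "'v \<Rightarrow> real"
  assumes vs: "distinct vs"
    and eigen: "\<And>w y. w \<in> set vs \<Longrightarrow> y \<in> set vs \<Longrightarrow> (\<Sum>x\<in>set vs. a w x * e y x) = mu y * e y w"
    and indep: "\<And>c y. (\<And>w. w \<in> set vs \<Longrightarrow> (\<Sum>y\<in>set vs. c y * e y w) = 0) \<Longrightarrow> y \<in> set vs \<Longrightarrow> c y = 0"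
  shows "spectrum_mset (mat (length vs) (length vs) (\<lambda>(i, j). a (vs ! i) (vs ! j))) (image_mset mu (mset vs))"
proof -
  define n where "n = length vs"
  define A where "A = mat n n (\<lambda>(i, j). a (vs ! i) (vs ! j))"
  define P where "P = mat n n (\<lambda>(i, j). e (vs ! j) (vs ! i))"
  have P: "P \<in> carrier_mat n n" unfolding P_def by simp
  have AP: "A * P = P * mat n n (\<lambda>(i, j). if i = j then mu (vs ! i) else 0)"
  proof (rule eq_matI)
    fix i j assume "i < dim_row (P * mat n n (\<lambda>(i, j). if i = j then mu (vs ! i) else 0))"
      and "j < dim_col (P * mat n n (\<lambda>(i, j). if i = j then mu (vs ! i) else 0))"
    then have i: "i < n" and j: "j < n" by (auto simp: P_def)
    have "(A * P) $$ (i, j) = (\<Sum>k<n. a (vs ! i) (vs ! k) * e (vs ! j) (vs ! k))"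
      using i j by (simp add: A_def P_def scalar_prod_def atLeast0LessThan)
    also have "\<dots> = mu (vs ! j) * e (vs ! j) (vs ! i)"
      using sum_nth_distinct[OF vs, of "\<lambda>x. a (vs ! i) x * e (vs ! j) x"] eigen i j by (simp add: n_def)
    also have "\<dots> = (P * mat n n (\<lambda>(i, j). if i = j then mu (vs ! i) else 0)) $$ (i, j)"
      using i j by (simp add: P_def scalar_prod_def if_distrib[of "\<lambda>x. _ * x"] cong: if_cong)
    finally show "(A * P) $$ (i, j) = \<dots>" .
  qed (auto simp: A_def P_def)
  have "det P \<noteq> 0"
    unfolding P_def n_def by (rule det_mat_ne_zero_if_independent[OF vs]) (fact indep)
  then have "char_poly A = (\<Prod>i\<leftarrow>[0..<n]. [:- mu (vs ! i), 1:])"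
    using char_poly_diagonalizable[OF _ P _ AP] by (simp add: A_def)
  also have "\<dots> = (\<Prod>y\<leftarrow>vs. [:- mu y, 1:])"
    by (metis (no_types, lifting) map_map map_nth comp_apply n_def map_eq_conv)
  also have "\<dots> = (\<Prod>x\<in>#image_mset mu (mset vs). [:- x, 1:])"
    by (simp flip: prod_mset_prod_list add: image_mset.compositionality comp_def)
  finally show ?thesis unfolding spectrum_mset_def A_def n_def .
qed

lemma image_mset_mset_set_eq_sum: "finite A \<Longrightarrow> image_mset f (mset_set A) = (\<Sum>x\<in>A. {#f x#})"
  by (induct A rule: finite_induct) auto

lemma sum_const_singleton_mset: "finite A \<Longrightarrow> (\<Sum>x\<in>A. {#c#}) = replicate_mset (card A) c"
  by (induct A rule: finite_induct) auto

lemma sum_singleton_mset_remove_const: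
  assumes "finite B" "r \<in> B" "\<And>y. y \<in> B - {r} \<Longrightarrow> f y = c"
  shows "(\<Sum>y\<in>B. {#f y#}) = add_mset (f r) (replicate_mset (card B - 1) c)"
proof -
  have "(\<Sum>y\<in>B. {#f y#}) = {#f r#} + (\<Sum>y\<in>B - {r}. {#c#})"
    using assms by (simp add: sum.remove)
  then show ?thesis
    using assms(1,2) by (simp add: sum_const_singleton_mset)
qed

lemma size_filter_mset_neq: "size (filter_mset (\<lambda>x. x \<noteq> a) M) = size M - count M a"
proof -
  have "size M = size (filter_mset (\<lambda>x. x \<noteq> a) M) + size (filter_mset (\<lambda>x. x = a) M)"
    by (induct M) auto
  then show ?thesis
    by (simp add: filter_eq_replicate_mset)
qed

text \<open>The join of the complete graph on Z with the disjoint union of the complete graphs on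
  the blocks blk x, x \<notin> Z, which are called components below; F0 is a fixed component.\<close>

locale cone_of_cliques =
  fixes V Z :: "'a set" and blk :: "'a \<Rightarrow> 'a set" and adj :: "'a \<Rightarrow> 'a \<Rightarrow> bool"
    and F0 :: "'a set"
  assumes finite_V: "finite V" and Z_subset: "Z \<subseteq> V" and Z_nonempty: "Z \<noteq> {}"
    and blk_center: "\<And>x. x \<in> Z \<Longrightarrow> blk x = Z"
    and blk_self: "\<And>x. x \<in> V \<Longrightarrow> x \<in> blk x"
    and blk_subset: "\<And>x. x \<in> V \<Longrightarrow> blk x \<subseteq> V"
    and blk_eq: "\<And>x y. x \<in> V \<Longrightarrow> y \<in> blk x \<Longrightarrow> blk y = blk x"
    and adj_iff: "\<And>x y. adj x y \<longleftrightarrow> x \<in> V \<and> y \<in> V \<and> x \<noteq> y \<and> (x \<in> Z \<or> y \<in> Z \<or> blk x = blk y)"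
    and F0_comp: "F0 \<in> blk ` (V - Z)"
begin

definition comps :: "'a set set" where
  "comps = blk ` (V - Z)"

definition nbhd :: "'a \<Rightarrow> 'a set" where
  "nbhd w = {x. adj w x}"

definition lap :: "'a \<Rightarrow> 'a \<Rightarrow> real" where
  "lap w x = (if w = x then real (card (nbhd w)) else if adj w x then -1 else 0)"

definition rep :: "'a set \<Rightarrow> 'a" where
  "rep B = (SOME x. x \<in> B)"

lemma finite_Z: "finite Z"
  using finite_V Z_subset finite_subset by blast

lemma finite_blk: "x \<in> V \<Longrightarrow> finite (blk x)"
  using finite_V blk_subset finite_subset by blast

lemma mem_blk_iff: "x \<in> V \<Longrightarrow> u \<in> V \<Longrightarrow> x \<in> blk u \<longleftrightarrow> blk x = blk u"
  using blk_eq blk_self by metis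

lemma blk_eq_Z_iff: "x \<in> V \<Longrightarrow> blk x = Z \<longleftrightarrow> x \<in> Z"
  using blk_center blk_self by metis

lemma blk_disjoint_Z: "x \<in> V \<Longrightarrow> x \<notin> Z \<Longrightarrow> blk x \<inter> Z = {}"
  using blk_eq blk_center blk_self by blast

lemma rep_in_blk: "x \<in> V \<Longrightarrow> rep (blk x) \<in> blk x"
  unfolding rep_def using blk_self by (metis someI_ex)

lemma rep_in_V: "x \<in> V \<Longrightarrow> rep (blk x) \<in> V"
  using rep_in_blk blk_subset by blast

lemma blk_rep: "x \<in> V \<Longrightarrow> blk (rep (blk x)) = blk x"
  using rep_in_blk blk_eq by blast

lemma not_mem_nbhd: "w \<notin> nbhd w"
  unfolding nbhd_def using adj_iff by auto

lemma finite_nbhd: "finite (nbhd w)"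
  using finite_V by (rule finite_subset[rotated]) (auto simp: nbhd_def adj_iff)

lemma nbhd_center: "w \<in> Z \<Longrightarrow> nbhd w = V - {w}"
  unfolding nbhd_def using adj_iff Z_subset by auto

lemma nbhd_noncenter:
  assumes w: "w \<in> V" "w \<notin> Z"
  shows "nbhd w = (Z \<union> blk w) - {w}"
proof -
  have "x \<in> V" if "x \<in> Z \<union> blk w" for x
    using that Z_subset blk_subset[OF w(1)] by auto
  then show ?thesis
    unfolding nbhd_def adj_iff using w mem_blk_iff by auto
qed

lemma card_nbhd_plus_one:
  assumes w: "w \<in> V"
  shows "real (card (nbhd w)) + 1 = (if w \<in> Z then real (card V) else real (card (blk w) + card Z))"
proof (cases "w \<in> Z")
  case True
  have "card V > 0" using w finite_V by (auto simp: card_gt_0_iff)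
  then show ?thesis
    using True w finite_V by (simp add: nbhd_center card_Diff_singleton of_nat_diff)
next
  case False
  have "card (Z \<union> blk w) = card Z + card (blk w)"
    using finite_Z finite_blk[OF w] blk_disjoint_Z[OF w False] by (simp add: card_Un_disjoint inf_commute)
  moreover have "w \<in> Z \<union> blk w" and "card (blk w) > 0"
    using blk_self[OF w] finite_blk[OF w] by (auto simp: card_gt_0_iff)
  ultimately show ?thesis
    using False w finite_Z finite_blk[OF w] by (simp add: nbhd_noncenter card_Diff_singleton of_nat_diff)
qed

lemma lap_apply:
  assumes "w \<in> V"
  shows "(\<Sum>x\<in>V. lap w x * f x) = (\<Sum>x\<in>nbhd w. f w - f x)"
proof -
  have N: "nbhd w \<subseteq> V"
    by (auto simp: nbhd_def adj_iff)
  have "(\<Sum>x\<in>V. lap w x * f x)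
      = (\<Sum>x\<in>V. (if x = w then real (card (nbhd w)) * f w else 0) + (if x \<in> nbhd w then - f x else 0))"
    by (rule sum.cong) (auto simp: lap_def nbhd_def adj_iff)
  also have "\<dots> = real (card (nbhd w)) * f w + (\<Sum>x\<in>nbhd w. - f x)"
    using assms finite_V N by (simp add: sum.distrib Int_absorb1 flip: sum.inter_restrict)
  also have "\<dots> = (\<Sum>x\<in>nbhd w. f w - f x)"
    by (simp add: sum_subtractf sum_negf)
  finally show ?thesis .
qed

lemma finite_comps: "finite comps"
  using finite_V by (simp add: comps_def)

lemma F0_in_comps: "F0 \<in> comps"
  using F0_comp by (simp add: comps_def)

lemma mem_comp:
  assumes "F \<in> comps" "y \<in> F"
  shows "y \<in> V" "y \<notin> Z" "blk y = F"
proof -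
  obtain u where u: "u \<in> V" "u \<notin> Z" "blk u = F"
    using assms(1) by (auto simp: comps_def)
  then show "y \<in> V" "blk y = F"
    using assms(2) blk_subset[OF u(1)] blk_eq[OF u(1)] by auto
  then show "y \<notin> Z"
    using assms(2) blk_disjoint_Z[OF u(1,2)] u(3) by auto
qed

lemma mem_comp_iff: "F \<in> comps \<Longrightarrow> x \<in> V \<Longrightarrow> x \<in> F \<longleftrightarrow> blk x = F"
  using mem_comp(3) blk_self by blast

lemma comps_disjoint: "A \<in> comps \<Longrightarrow> B \<in> comps \<Longrightarrow> A \<noteq> B \<Longrightarrow> A \<inter> B = {}"
  using mem_comp(3)[of A] mem_comp(3)[of B] by auto

lemma comp_finite: "F \<in> comps \<Longrightarrow> finite F"
  using finite_blk by (auto simp: comps_def)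

lemma comp_nonempty: "F \<in> comps \<Longrightarrow> rep F \<in> F"
  using rep_in_blk by (auto simp: comps_def)

subsection \<open>An eigenbasis of the Laplacian\<close>

definition block_diff :: "'a \<Rightarrow> 'a \<Rightarrow> real" where
  "block_diff y x = (if x = y then 1 else if x = rep (blk y) then -1 else 0)"

definition center_vec :: "'a \<Rightarrow> real" where
  "center_vec x = (if x \<in> Z then real (card V) - real (card Z) else - real (card Z))"

definition comp_vec :: "'a set \<Rightarrow> 'a \<Rightarrow> real" where
  "comp_vec F x = (if x \<in> F0 then real (card F) else if x \<in> F then - real (card F0) else 0)"

definition eigvec :: "'a \<Rightarrow> 'a \<Rightarrow> real" where
  "eigvec y = (if y \<noteq> rep (blk y) then block_diff y else if y \<in> Z then (\<lambda>_. 1)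
     else if blk y = F0 then center_vec else comp_vec (blk y))"

definition eigval :: "'a \<Rightarrow> real" where
  "eigval y = (if y \<noteq> rep (blk y) then (if y \<in> Z then real (card V) else real (card (blk y) + card Z))
     else if y \<in> Z then 0 else if blk y = F0 then real (card V) else real (card Z))"

lemma block_diff_eigen:
  assumes y: "y \<in> V" "y \<noteq> rep (blk y)" and w: "w \<in> V"
  shows "(\<Sum>x\<in>V. lap w x * block_diff y x)
    = (if y \<in> Z then real (card V) else real (card (blk y) + card Z)) * block_diff y w"
proof -
  define r where "r = rep (blk y)"
  define lam where "lam = (if y \<in> Z then real (card V) else real (card (blk y) + card Z))"
  have r: "r \<in> V" "blk r = blk y" "y \<noteq> r" "r \<in> Z \<longleftrightarrow> y \<in> Z"
    using y rep_in_V blk_rep blk_eq_Z_iff unfolding r_def by metis+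
  have deg: "real (card (nbhd y)) + 1 = lam" "real (card (nbhd r)) + 1 = lam"
    using card_nbhd_plus_one[OF y(1)] card_nbhd_plus_one[OF r(1)] r unfolding lam_def by simp_all
  have adj_yr: "r \<in> nbhd y" "y \<in> nbhd r"
    unfolding nbhd_def adj_iff using y r by auto
  have sum: "(\<Sum>x\<in>nbhd w. block_diff y w - block_diff y x)
    = real (card (nbhd w)) * block_diff y w - ((if y \<in> nbhd w then 1 else 0) - (if r \<in> nbhd w then 1 else 0))"
  proof -
    have "(\<Sum>x\<in>nbhd w. block_diff y x) = (\<Sum>x\<in>nbhd w. (if x = y then 1 else 0) - (if x = r then 1 else 0))"
      using r(3) by (intro sum.cong) (auto simp: block_diff_def r_def)
    then show ?thesis
      using finite_nbhd by (simp add: sum_subtractf)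
  qed
  have "(\<Sum>x\<in>nbhd w. block_diff y w - block_diff y x) = lam * block_diff y w"
  proof -
    consider "w = y" | "w = r" | "w \<noteq> y" "w \<noteq> r" by blast
    then show ?thesis
    proof cases
      case 1
      have "block_diff y w = 1" using 1 by (simp add: block_diff_def)
      then show ?thesis
        using sum 1 adj_yr deg not_mem_nbhd[of y] by simp
    next
      case 2
      have "block_diff y w = -1" using 2 r(3) by (simp add: block_diff_def r_def)
      then show ?thesis
        using sum 2 adj_yr deg not_mem_nbhd[of r] by simp
    next
      case 3
      then have "y \<in> nbhd w \<longleftrightarrow> r \<in> nbhd w"
        unfolding nbhd_def adj_iff using y r by auto
      then show ?thesis
        using sum 3 by (simp add: block_diff_def r_def)
    qed
  qed
  then show ?thesis
    using lap_apply[OF w] unfolding lam_def by simp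
qed

lemma center_vec_eigen:
  assumes w: "w \<in> V"
  shows "(\<Sum>x\<in>V. lap w x * center_vec x) = real (card V) * center_vec w"
proof -
  have "(\<Sum>x\<in>nbhd w. center_vec w - center_vec x) = real (card V) * center_vec w"
  proof (cases "w \<in> Z")
    case True
    have "(\<Sum>x\<in>nbhd w. center_vec w - center_vec x) = (\<Sum>x\<in>V - Z. real (card V))"
      using True finite_V by (intro sum.mono_neutral_cong_right) (auto simp: nbhd_center center_vec_def)
    also have "\<dots> = real (card V) * (real (card V) - real (card Z))"
      using Z_subset finite_V by (simp add: card_Diff_subset finite_subset card_mono of_nat_diff)
    finally show ?thesis using True by (simp add: center_vec_def)
  next
    case False
    have "(\<Sum>x\<in>nbhd w. center_vec w - center_vec x) = (\<Sum>x\<in>Z. - real (card V))"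
    proof (rule sum.mono_neutral_cong_right)
      show "finite (nbhd w)" by (rule finite_nbhd)
      show "Z \<subseteq> nbhd w" using False w by (auto simp: nbhd_noncenter)
      show "\<forall>x\<in>nbhd w - Z. center_vec w - center_vec x = 0"
        using False w by (simp add: nbhd_noncenter center_vec_def)
      show "center_vec w - center_vec x = - real (card V)" if "x \<in> Z" for x
        using that False by (simp add: center_vec_def)
    qed
    then show ?thesis using False by (simp add: center_vec_def)
  qed
  then show ?thesis
    using lap_apply[OF w] by simp
qed

lemma sum_comp_vec:
  assumes F: "F \<in> comps" "F \<noteq> F0"
  shows "(\<Sum>x\<in>V. comp_vec F x) = 0"
proof -
  have "F \<subseteq> V" "F0 \<subseteq> V" using mem_comp(1) F(1) F0_in_comps by blast+
  have "(\<Sum>x\<in>V. comp_vec F x)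
      = (\<Sum>x\<in>V. (if x \<in> F0 then real (card F) else 0) + (if x \<in> F then - real (card F0) else 0))"
    using comps_disjoint[OF F0_in_comps F(1)] F(2) by (intro sum.cong) (auto simp: comp_vec_def)
  also have "\<dots> = real (card F) * real (card (V \<inter> F0)) - real (card F0) * real (card (V \<inter> F))"
    using finite_V by (simp add: sum.distrib flip: sum.inter_restrict)
  finally show ?thesis
    using \<open>F \<subseteq> V\<close> \<open>F0 \<subseteq> V\<close> by (simp add: Int_absorb1)
qed

lemma comp_vec_center: "F \<in> comps \<Longrightarrow> z \<in> Z \<Longrightarrow> comp_vec F z = 0"
  using mem_comp(2) F0_in_comps by (auto simp: comp_vec_def)

lemma comp_vec_eigen:
  assumes w: "w \<in> V" and F: "F \<in> comps" "F \<noteq> F0"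
  shows "(\<Sum>x\<in>V. lap w x * comp_vec F x) = real (card Z) * comp_vec F w"
proof -
  note Z_zero = comp_vec_center[OF F(1)]
  have "(\<Sum>x\<in>nbhd w. comp_vec F w - comp_vec F x) = real (card Z) * comp_vec F w"
  proof (cases "w \<in> Z")
    case True
    then show ?thesis
      using Z_zero w finite_V sum_comp_vec[OF F] by (simp add: nbhd_center sum_subtractf sum_diff1 sum_negf)
  next
    case False
    have "comp_vec F x = comp_vec F w" if "x \<in> blk w" for x
    proof -
      have "x \<in> V" and "blk x = blk w"
        using that blk_subset[OF w] blk_eq[OF w that] by auto
      then show ?thesis
        using mem_comp_iff[OF F(1)] mem_comp_iff[OF F0_in_comps] w by (simp add: comp_vec_def)
    qed
    then have "(\<Sum>x\<in>nbhd w. comp_vec F w - comp_vec F x) = (\<Sum>x\<in>Z. comp_vec F w - 0)"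
      using False w Z_zero by (intro sum.mono_neutral_cong_right) (auto simp: nbhd_noncenter finite_Z finite_blk)
    then show ?thesis by simp
  qed
  then show ?thesis
    using lap_apply[OF w] by simp
qed

lemma eigvec_eigen:
  assumes w: "w \<in> V" and y: "y \<in> V"
  shows "(\<Sum>x\<in>V. lap w x * eigvec y x) = eigval y * eigvec y w"
proof -
  consider "y \<noteq> rep (blk y)" | "y = rep (blk y)" "y \<in> Z" | "y = rep (blk y)" "y \<notin> Z" "blk y = F0"
    | "y = rep (blk y)" "y \<notin> Z" "blk y \<noteq> F0"
    by blast
  then show ?thesis
  proof cases
    case 1
    then show ?thesis
      using block_diff_eigen[OF y 1 w] by (simp add: eigvec_def eigval_def)
  next
    case 2
    then show ?thesis
      using lap_apply[OF w, of "\<lambda>_. 1"] by (simp add: eigvec_def eigval_def)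
  next
    case 3
    then show ?thesis
      using center_vec_eigen[OF w] by (simp add: eigvec_def eigval_def)
  next
    case 4
    have "blk y \<in> comps" using y 4 by (simp add: comps_def)
    then show ?thesis
      using comp_vec_eigen[OF w _ 4(3)] 4 by (simp add: eigvec_def eigval_def)
  qed
qed

subsection \<open>Linear independence of the eigenvectors\<close>

definition reps :: "'a set" where
  "reps = {y \<in> V. rep (blk y) = y}"

lemma rep_in_reps: "x \<in> V \<Longrightarrow> rep (blk x) \<in> reps"
  unfolding reps_def using rep_in_V blk_rep by simp

lemma eigvec_reps_blk_const:
  assumes y: "y \<in> reps" and w: "w \<in> V" "w' \<in> V" "blk w = blk w'"
  shows "eigvec y w = eigvec y w'"
proof -
  obtain u0 where u0: "u0 \<in> V" "F0 = blk u0"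
    using F0_comp by auto
  have "y \<in> V" using y by (simp add: reps_def)
  have "w \<in> Z \<longleftrightarrow> w' \<in> Z" and "w \<in> F0 \<longleftrightarrow> w' \<in> F0" and "w \<in> blk y \<longleftrightarrow> w' \<in> blk y"
    using blk_eq_Z_iff mem_blk_iff w u0 \<open>y \<in> V\<close> by metis+
  then show ?thesis
    using y by (simp add: reps_def eigvec_def center_vec_def comp_vec_def)
qed

text \<open>The block differences stay independent modulo functions that are constant on blocks:
  at a non-representative w only the coefficient of w survives, and at a representative the
  coefficients of its block add up.\<close>

lemma block_diff_combination_zero:
  assumes T: "\<And>w w'. w \<in> V \<Longrightarrow> w' \<in> V \<Longrightarrow> blk w = blk w' \<Longrightarrow> T w = T w'"
    and zero: "\<And>w. w \<in> V \<Longrightarrow> (\<Sum>y\<in>V - reps. c y * block_diff y w) + T w = 0"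
  shows "(\<forall>w\<in>V. T w = 0) \<and> (\<forall>y\<in>V - reps. c y = 0)"
proof -
  have finite: "finite (V - reps)" using finite_V by simp
  have nonrep: "c w = - T w" if w: "w \<in> V - reps" for w
  proof -
    have "w \<noteq> rep (blk y)" if "y \<in> V - reps" for y
      using w that rep_in_reps by auto
    then have "(\<Sum>y\<in>V - reps. c y * block_diff y w) = (\<Sum>y\<in>V - reps. if w = y then c y else 0)"
      by (intro sum.cong) (auto simp: block_diff_def)
    then show ?thesis
      using zero[of w] w finite by simp
  qed
  have rep: "T w = 0" if w: "w \<in> reps" for w
  proof -
    have wV: "w \<in> V" and rw: "rep (blk w) = w" using w by (auto simp: reps_def)
    have "w = rep (blk y) \<longleftrightarrow> y \<in> blk w" and "w \<noteq> y" if "y \<in> V - reps" for y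
      using that w rw blk_rep mem_blk_iff[OF _ wV] by (metis DiffD1 DiffD2)+
    then have "(\<Sum>y\<in>V - reps. c y * block_diff y w) = (\<Sum>y\<in>V - reps. if y \<in> blk w then - c y else 0)"
      by (intro sum.cong) (auto simp: block_diff_def)
    also have "\<dots> = (\<Sum>y\<in>(V - reps) \<inter> blk w. T w)"
      using finite nonrep T[OF _ wV] blk_eq[OF wV] by (simp add: sum.inter_restrict[symmetric])
    finally have "(real (card ((V - reps) \<inter> blk w)) + 1) * T w = 0"
      using zero[OF wV] by (simp add: algebra_simps)
    then show ?thesis
      by (smt (verit) mult_eq_0_iff of_nat_0_le_iff)
  qed
  have "T w = 0" if "w \<in> V" for w
    using rep[OF rep_in_reps[OF that]] T[OF that rep_in_V[OF that]] blk_rep[OF that] by simp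
  then show ?thesis
    using nonrep by simp
qed

lemma rep_Z: "rep Z \<in> reps" "rep Z \<in> Z" "eigvec (rep Z) = (\<lambda>_. 1)"
proof -
  obtain z0 where z0: "z0 \<in> Z" using Z_nonempty by blast
  then have z0V: "z0 \<in> V" and "blk z0 = Z" using Z_subset blk_center by auto
  then show "rep Z \<in> reps" "rep Z \<in> Z"
    using rep_in_reps rep_in_blk by force+
  then show "eigvec (rep Z) = (\<lambda>_. 1)"
    using blk_center by (simp add: eigvec_def)
qed

lemma rep_F0: "rep F0 \<in> reps" "rep F0 \<notin> Z" "eigvec (rep F0) = center_vec"
proof -
  obtain u0 where u0: "u0 \<in> V" "u0 \<notin> Z" "blk u0 = F0" using F0_comp by auto
  then show "rep F0 \<in> reps" "rep F0 \<notin> Z" "eigvec (rep F0) = center_vec"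
    using rep_in_reps[OF u0(1)] rep_in_blk[OF u0(1)] blk_rep[OF u0(1)] blk_disjoint_Z[OF u0(1,2)]
    by (auto simp: eigvec_def reps_def)
qed

lemma other_reps:
  assumes "y \<in> reps - {rep Z, rep F0}"
  shows "y \<in> V" "y \<notin> Z" "blk y \<noteq> F0" "eigvec y = comp_vec (blk y)"
  using assms blk_center by (auto simp: reps_def eigvec_def)

lemma rep_eigvec_sum:
  "(\<Sum>y\<in>reps. c y * eigvec y w)
    = c (rep Z) + c (rep F0) * center_vec w + (\<Sum>y\<in>reps - {rep Z, rep F0}. c y * comp_vec (blk y) w)"
proof -
  define R' where "R' = reps - {rep Z, rep F0}"
  have "reps = insert (rep Z) (insert (rep F0) R')" "rep Z \<notin> insert (rep F0) R'" "rep F0 \<notin> R'"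
    using rep_Z rep_F0 by (auto simp: R'_def)
  moreover have "finite R'" using finite_V by (simp add: R'_def reps_def)
  ultimately have "(\<Sum>y\<in>reps. c y * eigvec y w)
      = c (rep Z) * eigvec (rep Z) w + (c (rep F0) * eigvec (rep F0) w + (\<Sum>y\<in>R'. c y * eigvec y w))"
    by simp
  also have "(\<Sum>y\<in>R'. c y * eigvec y w) = (\<Sum>y\<in>R'. c y * comp_vec (blk y) w)"
    using other_reps(4) by (simp add: R'_def)
  finally show ?thesis
    using rep_Z(3) rep_F0(3) by (simp add: R'_def add.assoc)
qed

lemma comp_vec_sum_at_other_rep:
  assumes y0: "y0 \<in> reps - {rep Z, rep F0}"
  shows "(\<Sum>y\<in>reps - {rep Z, rep F0}. c y * comp_vec (blk y) y0) = - c y0 * real (card F0)"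
proof -
  define R' where "R' = reps - {rep Z, rep F0}"
  have y0V: "y0 \<in> V" and "y0 \<notin> F0"
    using other_reps[OF y0] mem_comp_iff[OF F0_in_comps] by auto
  have "y0 \<notin> blk y" if y: "y \<in> R' - {y0}" for y
  proof
    assume "y0 \<in> blk y"
    then have "blk y0 = blk y" using mem_blk_iff[OF y0V] other_reps(1) y by (auto simp: R'_def)
    then show False using y y0 by (auto simp: R'_def reps_def)
  qed
  then have "(\<Sum>y\<in>R' - {y0}. c y * comp_vec (blk y) y0) = 0"
    using \<open>y0 \<notin> F0\<close> by (simp add: comp_vec_def)
  moreover have "finite R'" using finite_V by (simp add: R'_def reps_def)
  ultimately have "(\<Sum>y\<in>R'. c y * comp_vec (blk y) y0) = c y0 * comp_vec (blk y0) y0"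
    using y0 by (simp add: sum.remove R'_def)
  also have "\<dots> = - c y0 * real (card F0)"
    using \<open>y0 \<notin> F0\<close> blk_self[OF y0V] by (simp add: comp_vec_def)
  finally show ?thesis unfolding R'_def .
qed

text \<open>Evaluating at a central vertex, at a vertex of F0 and at the representative of any other
  component gives enough linear equations to force all coefficients to vanish.\<close>

lemma rep_eigvecs_independent:
  assumes zero: "\<And>w. w \<in> V \<Longrightarrow> (\<Sum>y\<in>reps. c y * eigvec y w) = 0" and y: "y \<in> reps"
  shows "c y = 0"
proof -
  define R' where "R' = reps - {rep Z, rep F0}"
  define K where "K = c (rep Z) - c (rep F0) * real (card Z)"
  obtain z0 where z0: "z0 \<in> Z" using Z_nonempty by blast
  obtain u0 where u0: "u0 \<in> V" "u0 \<notin> Z" "F0 = blk u0" using F0_comp by auto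
  note R' = other_reps[folded R'_def] and sum = rep_eigvec_sum[of c, folded R'_def]
  have "finite R'" using finite_V by (simp add: R'_def reps_def)
  have F0_pos: "real (card F0) > 0"
    using comp_finite[OF F0_in_comps] comp_nonempty[OF F0_in_comps] by (auto simp: card_gt_0_iff)
  have at_center: "c (rep Z) + c (rep F0) * (real (card V) - real (card Z)) = 0"
  proof -
    have "comp_vec (blk y) z0 = 0" if "y \<in> R'" for y
      using comp_vec_center[of "blk y" z0] R'(1,2)[OF that] z0 by (simp add: comps_def)
    then show ?thesis
      using zero[of z0] sum z0 Z_subset by (auto simp: center_vec_def)
  qed
  have at_F0: "K + (\<Sum>y\<in>R'. c y * real (card (blk y))) = 0"
  proof -
    have "u0 \<in> F0" using blk_self[OF u0(1)] u0(3) by simp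
    then show ?thesis
      using zero[OF u0(1)] sum u0(2) by (simp add: center_vec_def comp_vec_def K_def)
  qed
  have at_rep: "c y0 = K / real (card F0)" if y0: "y0 \<in> R'" for y0
  proof -
    have "y0 \<in> V" "y0 \<notin> Z" "y0 \<notin> F0"
      using R'(1,2)[OF y0] mem_comp_iff[OF F0_in_comps] R'(3)[OF y0] by auto
    then have "K - c y0 * real (card F0) = 0"
      using zero[of y0] sum comp_vec_sum_at_other_rep[of y0 c] y0
      by (simp add: center_vec_def K_def R'_def)
    then show ?thesis
      using F0_pos by (simp add: field_simps)
  qed
  have "K * (1 + (\<Sum>y\<in>R'. real (card (blk y))) / real (card F0)) = 0"
    using at_F0 at_rep by (simp add: algebra_simps sum_divide_distrib sum_distrib_left)
  moreover have "(\<Sum>y\<in>R'. real (card (blk y))) / real (card F0) \<ge> 0"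
    using F0_pos by (simp add: sum_nonneg)
  ultimately have "K = 0" by simp
  moreover have "real (card V) > 0"
    using z0 Z_subset finite_V by (auto simp: card_gt_0_iff)
  ultimately have "c (rep F0) = 0"
    using at_center unfolding K_def by (simp add: algebra_simps)
  with \<open>K = 0\<close> have "c (rep Z) = 0" "\<forall>y\<in>R'. c y = 0"
    using at_rep by (simp_all add: K_def)
  with \<open>c (rep F0) = 0\<close> show ?thesis
    using y by (auto simp: R'_def)
qed

lemma eigvecs_independent:
  assumes zero: "\<And>w. w \<in> V \<Longrightarrow> (\<Sum>y\<in>V. c y * eigvec y w) = 0" and y: "y \<in> V"
  shows "c y = 0"
proof -
  define T where "T w = (\<Sum>y\<in>reps. c y * eigvec y w)" for w
  have reps: "reps \<subseteq> V" by (auto simp: reps_def)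
  have "(\<Sum>y\<in>V - reps. c y * block_diff y w) + T w = 0" if "w \<in> V" for w
  proof -
    have "(\<Sum>y\<in>V - reps. c y * block_diff y w) = (\<Sum>y\<in>V - reps. c y * eigvec y w)"
      by (intro sum.cong) (auto simp: reps_def eigvec_def)
    then show ?thesis
      using zero[OF that] sum.subset_diff[OF reps finite_V, of "\<lambda>y. c y * eigvec y w"] by (simp add: T_def)
  qed
  moreover have "T w = T w'" if "w \<in> V" "w' \<in> V" "blk w = blk w'" for w w'
    unfolding T_def using eigvec_reps_blk_const[OF _ that] by simp
  ultimately have "\<forall>w\<in>V. T w = 0" "\<forall>y\<in>V - reps. c y = 0"
    using block_diff_combination_zero[of T c] by blast+
  then show ?thesis
    using rep_eigvecs_independent[of c y] y by (cases "y \<in> reps") (auto simp: T_def)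
qed

subsection \<open>The spectrum\<close>

definition lap_eigenvalues :: "real multiset" where
  "lap_eigenvalues = {#0#} + replicate_mset (card comps - 1) (real (card Z))
     + (\<Sum>F\<in>comps. replicate_mset (card F - 1) (real (card F + card Z)))
     + replicate_mset (card Z) (real (card V))"

lemma eigval_sum_Z: "(\<Sum>y\<in>Z. {#eigval y#}) = add_mset 0 (replicate_mset (card Z - 1) (real (card V)))"
proof -
  have "eigval (rep Z) = 0"
    using rep_Z(2) blk_center by (simp add: eigval_def)
  moreover have "(\<Sum>y\<in>Z. {#eigval y#}) = add_mset (eigval (rep Z)) (replicate_mset (card Z - 1) (real (card V)))"
    using blk_center by (intro sum_singleton_mset_remove_const[OF finite_Z rep_Z(2)]) (simp add: eigval_def)
  ultimately show ?thesis by simp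
qed

lemma eigval_sum_comp:
  assumes F: "F \<in> comps"
  shows "(\<Sum>y\<in>F. {#eigval y#})
    = add_mset (if F = F0 then real (card V) else real (card Z)) (replicate_mset (card F - 1) (real (card F + card Z)))"
proof -
  have r: "rep F \<in> F" using comp_nonempty[OF F] .
  have "(\<Sum>y\<in>F. {#eigval y#}) = add_mset (eigval (rep F)) (replicate_mset (card F - 1) (real (card F + card Z)))"
    using comp_finite[OF F] mem_comp[OF F] by (intro sum_singleton_mset_remove_const[OF _ r]) (auto simp: eigval_def)
  moreover have "eigval (rep F) = (if F = F0 then real (card V) else real (card Z))"
    using mem_comp[OF F r] by (simp add: eigval_def)
  ultimately show ?thesis by simp
qed

lemma image_mset_eigval: "image_mset eigval (mset_set V) = lap_eigenvalues"
proof -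
  have comps: "\<forall>A\<in>comps. finite A" "\<forall>A\<in>comps. \<forall>B\<in>comps. A \<noteq> B \<longrightarrow> A \<inter> B = {}"
    using comps_disjoint comp_finite by blast+
  have "\<Union>comps = V - Z"
  proof
    show "\<Union>comps \<subseteq> V - Z" using mem_comp(1,2) by blast
    show "V - Z \<subseteq> \<Union>comps"
    proof
      fix x assume "x \<in> V - Z"
      then have "blk x \<in> comps" "x \<in> blk x" using blk_self by (auto simp: comps_def)
      then show "x \<in> \<Union>comps" by blast
    qed
  qed
  then have "(\<Sum>y\<in>V - Z. {#eigval y#}) = (\<Sum>F\<in>comps. \<Sum>y\<in>F. {#eigval y#})"
    using sum.Union_disjoint[OF comps, of "\<lambda>y. {#eigval y#}"] by simp
  also have "\<dots> = (\<Sum>F\<in>comps. replicate_mset (card F - 1) (real (card F + card Z))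
      + {#if F = F0 then real (card V) else real (card Z)#})"
    by (rule sum.cong) (simp_all add: eigval_sum_comp)
  also have "\<dots> = (\<Sum>F\<in>comps. replicate_mset (card F - 1) (real (card F + card Z)))
      + (\<Sum>F\<in>comps. {#if F = F0 then real (card V) else real (card Z)#})"
    by (rule sum.distrib)
  also have "(\<Sum>F\<in>comps. {#if F = F0 then real (card V) else real (card Z)#})
      = add_mset (real (card V)) (replicate_mset (card comps - 1) (real (card Z)))"
    using sum_singleton_mset_remove_const[OF finite_comps F0_in_comps,
        of "\<lambda>F. if F = F0 then real (card V) else real (card Z)" "real (card Z)"] by simp
  finally have "image_mset eigval (mset_set V)
      = (\<Sum>F\<in>comps. replicate_mset (card F - 1) (real (card F + card Z)))
        + add_mset (real (card V)) (replicate_mset (card comps - 1) (real (card Z)))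
        + add_mset 0 (replicate_mset (card Z - 1) (real (card V)))"
    by (simp only: image_mset_mset_set_eq_sum[OF finite_V] sum.subset_diff[OF Z_subset finite_V] eigval_sum_Z)
  moreover have "add_mset (real (card V)) (replicate_mset (card Z - 1) (real (card V)))
      = replicate_mset (card Z) (real (card V))"
    using finite_Z Z_nonempty by (cases "card Z") auto
  ultimately show ?thesis
    by (simp add: lap_eigenvalues_def add_ac)
qed

lemma lap_spectrum:
  assumes "distinct vs" "set vs = V"
  shows "spectrum_mset (mat (length vs) (length vs) (\<lambda>(i, j). if i = j then real (card (nbhd (vs ! i)))
    else if adj (vs ! i) (vs ! j) then -1 else 0)) lap_eigenvalues"
proof -
  have "mat (length vs) (length vs) (\<lambda>(i, j). if i = j then real (card (nbhd (vs ! i)))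
      else if adj (vs ! i) (vs ! j) then -1 else 0) = mat (length vs) (length vs) (\<lambda>(i, j). lap (vs ! i) (vs ! j))"
    using assms(1) by (intro eq_matI) (auto simp: lap_def nth_eq_iff_index_eq)
  moreover have "mset vs = mset_set V"
    using mset_set_set[OF assms(1)] assms(2) by simp
  ultimately show ?thesis
    using spectrum_mset_of_eigenbasis[of vs lap eigvec eigval] eigvec_eigen eigvecs_independent assms
    by (simp add: image_mset_eigval)
qed

lemma size_lap_eigenvalues_nonzero: "size (filter_mset (\<lambda>x. x \<noteq> 0) lap_eigenvalues) = card V - 1"
proof -
  have "card Z > 0" using finite_Z Z_nonempty by (simp add: card_gt_0_iff)
  moreover have "card Z \<le> card V" using card_mono[OF finite_V Z_subset] .
  ultimately have "count lap_eigenvalues 0 = 1"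
    by (simp add: lap_eigenvalues_def count_sum)
  moreover have "size lap_eigenvalues = card V"
    by (simp flip: image_mset_eigval)
  ultimately show ?thesis
    by (simp add: size_filter_mset_neq)
qed

lemma card_comp_add_card_Z_less:
  assumes "2 \<le> card comps" and F: "F \<in> comps"
  shows "card F + card Z < card V"
proof -
  obtain G where G: "G \<in> comps" "G \<noteq> F"
    using assms by (metis card_le_Suc0_iff_eq finite_comps not_less_eq_eq numeral_2_eq_2)
  have "F \<inter> G = {}" "Z \<inter> (F \<union> G) = {}"
    using comps_disjoint[OF F G(1)] G(2) mem_comp(2) F G(1) by auto
  moreover have "Z \<union> (F \<union> G) \<subseteq> V"
    using Z_subset mem_comp(1) F G by blast
  moreover have "card G > 0"
    using comp_finite[OF G(1)] comp_nonempty[OF G(1)] by (auto simp: card_gt_0_iff)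
  ultimately have "card Z + (card F + card G) \<le> card V"
    using finite_Z comp_finite F G finite_V
    by (metis card_Un_disjoint card_mono finite_UnI)
  then show ?thesis
    using \<open>card G > 0\<close> by linarith
qed

lemma Max_lap_eigenvalues:
  assumes "2 \<le> card comps"
  shows "Max (set_mset lap_eigenvalues) = real (card V)"
proof (rule Max_eqI)
  show "finite (set_mset lap_eigenvalues)" by simp
  show "real (card V) \<in> set_mset lap_eigenvalues"
    using finite_Z Z_nonempty by (simp add: lap_eigenvalues_def card_gt_0_iff)
  have "eigval y \<le> real (card V)" if "y \<in> V" for y
  proof (cases "y \<in> Z")
    case True
    then show ?thesis by (simp add: eigval_def)
  next
    case False
    have "card Z < card V"
      using card_comp_add_card_Z_less[OF assms F0_in_comps] by simp
    moreover have "card (blk y) + card Z < card V"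
      using card_comp_add_card_Z_less[OF assms] that False by (simp add: comps_def)
    ultimately show ?thesis
      using False by (simp add: eigval_def)
  qed
  then show "x \<le> real (card V)" if "x \<in># lap_eigenvalues" for x
    using that finite_V by (auto simp flip: image_mset_eigval)
qed

lemma count_lap_eigenvalues_card_V:
  assumes "2 \<le> card comps"
  shows "count lap_eigenvalues (real (card V)) = card Z"
proof -
  have "card Z < card V"
    using card_comp_add_card_Z_less[OF assms F0_in_comps] by simp
  moreover have "count (\<Sum>F\<in>comps. replicate_mset (card F - 1) (real (card F + card Z))) (real (card V)) = 0"
    unfolding count_sum using card_comp_add_card_Z_less[OF assms] by (intro sum.neutral) force
  ultimately show ?thesis
    by (simp add: lap_eigenvalues_def)
qed

end

subsection \<open>Commuting graphs under condition (Con)\<close>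

lemma center_subset_carrier: "grp_center G \<subseteq> carrier G"
  unfolding grp_center_def by auto

lemma centralizer_carrier: "v \<in> grp_centralizer G u \<Longrightarrow> v \<in> carrier G"
  unfolding grp_centralizer_def by auto

lemma mem_centralizer_self: "u \<in> carrier G \<Longrightarrow> u \<in> grp_centralizer G u"
  unfolding grp_centralizer_def by simp

lemma center_subset_centralizer: "u \<in> carrier G \<Longrightarrow> grp_center G \<subseteq> grp_centralizer G u"
  unfolding grp_centralizer_def grp_center_def by auto

lemma one_mem_center: "group G \<Longrightarrow> \<one>\<^bsub>G\<^esub> \<in> grp_center G"
  unfolding grp_center_def by (simp add: group.is_monoid)

definition comm_block :: "('a, 'b) monoid_scheme \<Rightarrow> 'a \<Rightarrow> 'a set" where
  "comm_block G x = (if x \<in> grp_center G then grp_center G else grp_centralizer G x - grp_center G)"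

context
  fixes G :: "('a, 'b) monoid_scheme"
  assumes con: "con_condition G"
begin

lemma centralizer_eq_if_commute:
  assumes u: "u \<in> carrier G" "u \<notin> grp_center G" and v: "v \<in> carrier G" "v \<notin> grp_center G"
    and vu: "v \<in> grp_centralizer G u"
  shows "grp_centralizer G v = grp_centralizer G u"
proof -
  have "v \<in> grp_centralizer G u \<inter> grp_centralizer G v" using vu mem_centralizer_self[OF v(1)] by simp
  then have "grp_centralizer G u \<inter> grp_centralizer G v \<noteq> grp_center G" using v(2) by auto
  then show ?thesis using con u v unfolding con_condition_def by auto
qed

lemma comm_block_eq:
  assumes "x \<in> carrier G" "y \<in> comm_block G x"
  shows "comm_block G y = comm_block G x"
proof (cases "x \<in> grp_center G")
  case False
  then have "y \<in> grp_centralizer G x" "y \<notin> grp_center G" "y \<in> carrier G"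
    using assms centralizer_carrier by (auto simp: comm_block_def)
  then show ?thesis
    using centralizer_eq_if_commute[OF assms(1) False] False by (simp add: comm_block_def)
qed (use assms in \<open>simp add: comm_block_def\<close>)

lemma commute_iff_comm_block:
  assumes x: "x \<in> carrier G" and y: "y \<in> carrier G"
  shows "x \<otimes>\<^bsub>G\<^esub> y = y \<otimes>\<^bsub>G\<^esub> x
    \<longleftrightarrow> x \<in> grp_center G \<or> y \<in> grp_center G \<or> comm_block G x = comm_block G y"
proof (cases "x \<in> grp_center G \<or> y \<in> grp_center G")
  case True
  then show ?thesis using x y unfolding grp_center_def by auto
next
  case False
  have "x \<otimes>\<^bsub>G\<^esub> y = y \<otimes>\<^bsub>G\<^esub> x \<longleftrightarrow> y \<in> comm_block G x"
    using y False by (auto simp: comm_block_def grp_centralizer_def)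
  also have "\<dots> \<longleftrightarrow> comm_block G x = comm_block G y"
  proof
    show "comm_block G x = comm_block G y" if "y \<in> comm_block G x"
      using comm_block_eq[OF x that] by simp
    have "y \<in> comm_block G y"
      using mem_centralizer_self[OF y] False by (simp add: comm_block_def)
    then show "y \<in> comm_block G x" if "comm_block G x = comm_block G y"
      using that by simp
  qed
  finally show ?thesis using False by simp
qed

lemma nc_component_eq:
  assumes u: "u \<in> carrier G" "u \<notin> grp_center G"
  shows "{v. (nc_adj G)\<^sup>*\<^sup>* u v} = grp_centralizer G u - grp_center G"
proof (intro Set.set_eqI iffI)
  fix v assume "v \<in> {v. (nc_adj G)\<^sup>*\<^sup>* u v}"
  then have "(nc_adj G)\<^sup>*\<^sup>* u v" by simp
  then show "v \<in> grp_centralizer G u - grp_center G"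
  proof (induction rule: rtranclp_induct)
    case base
    then show ?case using mem_centralizer_self[OF u(1)] u(2) by simp
  next
    case (step v w)
    have v: "v \<in> carrier G" "v \<notin> grp_center G"
      using step.IH centralizer_carrier by auto
    have w: "w \<notin> grp_center G" "w \<in> grp_centralizer G v"
      using step.hyps(2) unfolding nc_adj_def comm_adj_def grp_centralizer_def by auto
    then show ?case
      using centralizer_eq_if_commute[OF u v] step.IH by simp
  qed
next
  fix v assume "v \<in> grp_centralizer G u - grp_center G"
  then have "v = u \<or> nc_adj G u v"
    using u unfolding nc_adj_def comm_adj_def grp_centralizer_def by auto
  then show "v \<in> {v. (nc_adj G)\<^sup>*\<^sup>* u v}" by auto
qed

lemma nc_components_eq: "nc_components G = comm_block G ` (carrier G - grp_center G)"
  unfolding nc_components_def comm_block_def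
  using nc_component_eq by (intro image_cong) auto

lemma card_centralizer_nc_component:
  assumes "finite (carrier G)" and F: "F \<in> nc_components G" and v: "v \<in> F"
  shows "card (grp_centralizer G v) = card F + card (grp_center G)"
proof -
  obtain u where u: "u \<in> carrier G" "u \<notin> grp_center G" and Fu: "F = grp_centralizer G u - grp_center G"
    using F by (auto simp: nc_components_eq comm_block_def)
  have "v \<in> carrier G" "v \<notin> grp_center G" "v \<in> grp_centralizer G u"
    using v centralizer_carrier unfolding Fu by auto
  then have "grp_centralizer G v = grp_centralizer G u"
    using centralizer_eq_if_commute[OF u] by blast
  moreover have "finite (grp_centralizer G u)"
    using assms(1) centralizer_carrier by (meson finite_subset subsetI)
  moreover have "grp_center G \<subseteq> grp_centralizer G u"
    using center_subset_centralizer[OF u(1)] .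
  ultimately show ?thesis
    unfolding Fu by (metis card_Diff_subset card_mono finite_subset le_add_diff_inverse2)
qed

lemma cone_of_cliques_commuting_graph:
  assumes "group G" "finite (carrier G)" "x \<in> carrier G" "x \<notin> grp_center G"
  shows "cone_of_cliques (carrier G) (grp_center G) (comm_block G) (comm_adj G) (comm_block G x)"
proof
  show "finite (carrier G)" "grp_center G \<subseteq> carrier G"
    using assms(2) center_subset_carrier .
  show "grp_center G \<noteq> {}" using one_mem_center[OF assms(1)] by auto
  show "comm_block G z = grp_center G" if "z \<in> grp_center G" for z
    using that by (simp add: comm_block_def)
  show "u \<in> comm_block G u" "comm_block G u \<subseteq> carrier G" if "u \<in> carrier G" for u
    using that mem_centralizer_self center_subset_carrier[of G] centralizer_carrier
    by (auto simp: comm_block_def)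
  show "comm_block G v = comm_block G u" if "u \<in> carrier G" "v \<in> comm_block G u" for u v
    using comm_block_eq that .
  show "comm_adj G u v \<longleftrightarrow> u \<in> carrier G \<and> v \<in> carrier G \<and> u \<noteq> v
      \<and> (u \<in> grp_center G \<or> v \<in> grp_center G \<or> comm_block G u = comm_block G v)" for u v
    unfolding comm_adj_def using commute_iff_comm_block by blast
  show "comm_block G x \<in> comm_block G ` (carrier G - grp_center G)"
    using assms(3,4) by simp
qed

lemma two_le_card_nc_components:
  assumes "finite (carrier G)" and x: "x \<in> carrier G" and y: "y \<in> carrier G"
    and xy: "x \<otimes>\<^bsub>G\<^esub> y \<noteq> y \<otimes>\<^bsub>G\<^esub> x"
  shows "2 \<le> card (nc_components G)"
proof -
  have "x \<notin> grp_center G"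
    using y xy by (auto simp: grp_center_def)
  moreover have "y \<notin> grp_center G"
  proof
    assume "y \<in> grp_center G"
    then have "y \<otimes>\<^bsub>G\<^esub> x = x \<otimes>\<^bsub>G\<^esub> y" using x by (auto simp: grp_center_def)
    with xy show False by simp
  qed
  moreover have "comm_block G x \<noteq> comm_block G y"
    using commute_iff_comm_block[OF x y] xy by blast
  ultimately have "card {comm_block G x, comm_block G y} \<le> card (nc_components G)"
    using x y assms(1) by (intro card_mono) (auto simp: nc_components_eq)
  with \<open>comm_block G x \<noteq> comm_block G y\<close> show ?thesis by simp
qed

end

theorem theorem2p9:
  fixes G :: "('a, 'b) monoid_scheme" and vs :: "'a list"
  assumes "group G" and "finite (carrier G)"
    and "\<not> (\<forall>x \<in> carrier G. \<forall>y \<in> carrier G. x \<otimes>\<^bsub>G\<^esub> y = y \<otimes>\<^bsub>G\<^esub> x)"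
    and "con_condition G"
    and "distinct vs" and "set vs = carrier G"
  shows "let Z = grp_center G; comps = nc_components G;
             lam = (\<lambda>F. card (grp_centralizer G (SOME u. u \<in> F)));
             M = {#0#} + replicate_mset (card comps - 1) (real (card Z))
                 + (\<Sum>F\<in>comps. replicate_mset (card F - 1) (real (lam F)))
                 + replicate_mset (card Z) (real (card (carrier G)))
         in card comps \<ge> 2
            \<and> (\<forall>F\<in>comps. \<forall>u\<in>F. card (grp_centralizer G u) = lam F \<and> lam F = card F + card Z)
            \<and> spectrum_mset (comm_laplacian G vs) M
            \<and> size (filter_mset (\<lambda>x. x \<noteq> 0) M) = card (carrier G) - 1
            \<and> Max (set_mset M) = real (card (carrier G))
            \<and> count M (real (card (carrier G))) = card Z"
proof -
  obtain x y where x: "x \<in> carrier G" and y: "y \<in> carrier G" and xy: "x \<otimes>\<^bsub>G\<^esub> y \<noteq> y \<otimes>\<^bsub>G\<^esub> x"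
    using assms(3) by blast
  then have "x \<notin> grp_center G" by (auto simp: grp_center_def)
  then interpret cone: cone_of_cliques "carrier G" "grp_center G" "comm_block G" "comm_adj G" "comm_block G x"
    using cone_of_cliques_commuting_graph[OF assms(4,1,2) x] by simp
  have comps: "nc_components G = cone.comps"
    using nc_components_eq[OF assms(4)] by (simp add: cone.comps_def)
  have lam: "card (grp_centralizer G u) = card F + card (grp_center G)" if "F \<in> nc_components G" "u \<in> F" for F u
    using card_centralizer_nc_component[OF assms(4,2) that] .
  have lam_some: "card (grp_centralizer G (SOME u. u \<in> F)) = card F + card (grp_center G)"
    if "F \<in> nc_components G" for F
    using lam[OF that] that cone.comp_nonempty comps by (metis someI)
  have "(\<Sum>F\<in>nc_components G. replicate_mset (card F - 1) (real (card (grp_centralizer G (SOME u. u \<in> F)))))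
      = (\<Sum>F\<in>cone.comps. replicate_mset (card F - 1) (real (card F + card (grp_center G))))"
    using lam_some comps by (intro sum.cong) auto
  then have M: "{#0#} + replicate_mset (card (nc_components G) - 1) (real (card (grp_center G)))
      + (\<Sum>F\<in>nc_components G. replicate_mset (card F - 1) (real (card (grp_centralizer G (SOME u. u \<in> F)))))
      + replicate_mset (card (grp_center G)) (real (card (carrier G))) = cone.lap_eigenvalues"
    unfolding cone.lap_eigenvalues_def comps by simp
  have "comm_laplacian G vs = mat (length vs) (length vs) (\<lambda>(i, j).
      if i = j then real (card (cone.nbhd (vs ! i))) else if comm_adj G (vs ! i) (vs ! j) then -1 else 0)"
    unfolding comm_laplacian_def comm_degree_def cone.nbhd_def ..
  then show ?thesis
    unfolding Let_def M
    using two_le_card_nc_components[OF assms(4,2) x y xy] lam lam_some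
      cone.lap_spectrum[OF assms(5,6)] cone.size_lap_eigenvalues_nonzero
      cone.Max_lap_eigenvalues cone.count_lap_eigenvalues_card_V
    by (simp add: comps)
qed

end
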